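(* Let $1<p<\infty$, $v_0,v_1\in\mathscr V_p(0,\infty)$, $1/v_1\in L^{p'}_{\rm loc}(0,\infty)$, and suppose there is $c\in(0,\infty)$ with $\|v_1^{-1}\|_{L^{p'}(0,c)}\|v_0\|_{L^p(0,c)}=\|v_1^{-1}\|_{L^{p'}(c,\infty)}\|v_0\|_{L^p(c,\infty)}=\infty$. Then $L^{p'}_{1/v_0}(0,\infty)\subset\mathscr W_{p',1/v_1}$ and $\|g\|_{\mathscr W_{p',1/v_1}}\lesssim\|g\|_{p',1/v_0}$ for every $g\in L^{p'}_{1/v_0}(0,\infty)$.
   Context: $p'=p/(p-1)$. For $1\le r<\infty$, $\mathscr V_r(0,\infty)$ is the set of $v\in L^r_{\rm loc}(0,\infty)$, $v\ge0$, $\|v\|_{L^1(0,\infty)}\ne0$. For a weight $u$ and $1<r<\infty$, $L^r_u(0,\infty)=\{h:\|h\|_{r,u}:=\|uh\|_{L^r(0,\infty)}<\infty\}$. Under the hypotheses there exist unique strictly increasing absolutely continuous functions $a,b$ on $(0,\infty)$ with $a(t),b(t)\to0$ as $t\to0$, $a(t),b(t)\to\infty$ as $t\to\infty$, $a(t)<t<b(t)$, $\int_{a(t)}^t v_1^{-p'}=\int_t^{b(t)}v_1^{-p'}$ and $\bigl(\int_{a(t)}^{b(t)}v_1^{-p'}\bigr)^{1/p'}\bigl(\int_{a(t)}^{b(t)}v_0^{p}\bigr)^{1/p}=1$ for all $t>0$; $a^{-1}$ is the inverse of $a$, $V_1(t):=\int_{a(t)}^{b(t)}v_1^{-p'}$.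 For $g\in L^1_{\rm loc}(0,\infty)$: $\mathbb G(g)=\Bigl(\int_0^\infty v_1^{-p'}(t)\Bigl|\int_t^{a^{-1}(t)}\frac{g(x)}{V_1(x)}\bigl(\int_{a(x)}^t v_1^{-p'}\bigr)dx\Bigr|^{p'}dt\Bigr)^{1/p'}$, $\mathcal G(g)=\Bigl(\int_0^\infty v_1^{-p'}(t)V_1^{p'}(t)\Bigl|\int_t^{a^{-1}(t)}\frac{g(x)}{V_1(x)}dx\Bigr|^{p'}dt\Bigr)^{1/p'}$; $\mathscr W_{p',1/v_1}=\{g\in L^1_{\rm loc}(0,\infty):\|g\|_{\mathscr W_{p',1/v_1}}:=\mathbb G(g)+\mathcal G(g)<\infty\}$. $A\lesssim B$ means $A\le CB$ with $C$ depending only on $p$. *)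

theory Defs
  imports "HOL-Analysis.Analysis"
begin

text \<open>All functions live on the half line (0,\<infinity>); values outside are irrelevant.
  Norms are ennreal-valued so that the value \<infinity> is expressible.\<close>

definition enn_rt :: "real \<Rightarrow> ennreal \<Rightarrow> ennreal" where
  "enn_rt r X = (if X = \<infinity> then \<infinity> else ennreal (enn2real X powr (1 / r)))"

definition Lnorm :: "real \<Rightarrow> (real \<Rightarrow> real) \<Rightarrow> real set \<Rightarrow> ennreal" where
  "Lnorm r f A = enn_rt r (\<integral>\<^sup>+ x \<in> A. ennreal (\<bar>f x\<bar> powr r) \<partial>lborel)"

text \<open>L^r norm of h u on A, where the weight u = 1/v takes the value \<infinity> where v = 0.\<close>
definition Lnorm_inv :: "real \<Rightarrow> (real \<Rightarrow> real) \<Rightarrow> (real \<Rightarrow> real) \<Rightarrow> real set \<Rightarrow> ennreal" where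
  "Lnorm_inv r v h A = enn_rt r (\<integral>\<^sup>+ x \<in> A.
      (if v x = 0 then (if h x = 0 then 0 else \<infinity>) else ennreal (\<bar>h x / v x\<bar> powr r)) \<partial>lborel)"

definition loc_Lr :: "real \<Rightarrow> (real \<Rightarrow> real) \<Rightarrow> bool" where
  "loc_Lr r f \<longleftrightarrow> set_borel_measurable lborel {0<..} f \<and>
     (\<forall>x y. 0 < x \<longrightarrow> x \<le> y \<longrightarrow> Lnorm r f {x..y} < \<infinity>)"

definition loc_Lr_inv :: "real \<Rightarrow> (real \<Rightarrow> real) \<Rightarrow> bool" where
  "loc_Lr_inv r v \<longleftrightarrow> (\<forall>x y. 0 < x \<longrightarrow> x \<le> y \<longrightarrow> Lnorm_inv r v (\<lambda>_. 1) {x..y} < \<infinity>)"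

definition weight_class :: "real \<Rightarrow> (real \<Rightarrow> real) \<Rightarrow> bool" where
  "weight_class r v \<longleftrightarrow> loc_Lr r v \<and> (\<forall>x>0. v x \<ge> 0) \<and> Lnorm 1 v {0<..} \<noteq> 0"

definition abs_cont_on :: "real set \<Rightarrow> (real \<Rightarrow> real) \<Rightarrow> bool" where
  "abs_cont_on S f \<longleftrightarrow> (\<forall>e>0. \<exists>d>0. \<forall>(n::nat) l r.
      (\<forall>i<n. l i \<le> r i \<and> {l i..r i} \<subseteq> S) \<and>
      (\<forall>i<n. \<forall>j<n. i \<noteq> j \<longrightarrow> r i \<le> l j \<or> r j \<le> l i) \<and>
      (\<Sum>i<n. r i - l i) < d \<longrightarrow> (\<Sum>i<n. \<bar>f (r i) - f (l i)\<bar>) < e)"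

definition loc_abs_cont :: "(real \<Rightarrow> real) \<Rightarrow> bool" where
  "loc_abs_cont f \<longleftrightarrow> (\<forall>x y. 0 < x \<longrightarrow> x \<le> y \<longrightarrow> abs_cont_on {x..y} f)"

text \<open>v_1^{-p'} as a real function (v_1 > 0 a.e. under the hypotheses)\<close>
definition wgt :: "real \<Rightarrow> (real \<Rightarrow> real) \<Rightarrow> real \<Rightarrow> real" where
  "wgt q v x = (1 / v x) powr q"

definition Iw :: "real \<Rightarrow> (real \<Rightarrow> real) \<Rightarrow> real \<Rightarrow> real \<Rightarrow> real" where
  "Iw q v s t = (\<integral>x\<in>{s..t}. wgt q v x \<partial>lborel)"

definition ab_funcs :: "real \<Rightarrow> (real \<Rightarrow> real) \<Rightarrow> (real \<Rightarrow> real) \<Rightarrow> (real \<Rightarrow> real) \<Rightarrow> (real \<Rightarrow> real) \<Rightarrow> bool" where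
  "ab_funcs p v0 v1 a b \<longleftrightarrow>
     strict_mono_on {0<..} a \<and> strict_mono_on {0<..} b \<and>
     loc_abs_cont a \<and> loc_abs_cont b \<and>
     (a \<longlongrightarrow> 0) (at_right 0) \<and> (b \<longlongrightarrow> 0) (at_right 0) \<and>
     filterlim a at_top at_top \<and> filterlim b at_top at_top \<and>
     (\<forall>t>0. 0 < a t \<and> a t < t \<and> t < b t) \<and>
     (\<forall>t>0. (\<integral>\<^sup>+x\<in>{a t..t}. ennreal (wgt (p/(p-1)) v1 x) \<partial>lborel)
             = (\<integral>\<^sup>+x\<in>{t..b t}. ennreal (wgt (p/(p-1)) v1 x) \<partial>lborel)) \<and>
     (\<forall>t>0. Lnorm_inv (p/(p-1)) v1 (\<lambda>_. 1) {a t..b t} * Lnorm p v0 {a t..b t} = 1)"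

definition V1fun :: "real \<Rightarrow> (real \<Rightarrow> real) \<Rightarrow> (real \<Rightarrow> real) \<Rightarrow> (real \<Rightarrow> real) \<Rightarrow> real \<Rightarrow> real" where
  "V1fun q v1 a b t = Iw q v1 (a t) (b t)"

definition GG :: "real \<Rightarrow> (real \<Rightarrow> real) \<Rightarrow> (real \<Rightarrow> real) \<Rightarrow> (real \<Rightarrow> real) \<Rightarrow> (real \<Rightarrow> real) \<Rightarrow> ennreal" where
  "GG q v1 a b g = enn_rt q (\<integral>\<^sup>+ t \<in> {0<..}. ennreal (wgt q v1 t *
      \<bar>\<integral>x\<in>{t..inv_into {0<..} a t}. g x / V1fun q v1 a b x * Iw q v1 (a x) t \<partial>lborel\<bar> powr q) \<partial>lborel)"

definition GGc :: "real \<Rightarrow> (real \<Rightarrow> real) \<Rightarrow> (real \<Rightarrow> real) \<Rightarrow> (real \<Rightarrow> real) \<Rightarrow> (real \<Rightarrow> real) \<Rightarrow> ennreal" where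
  "GGc q v1 a b g = enn_rt q (\<integral>\<^sup>+ t \<in> {0<..}. ennreal (wgt q v1 t * V1fun q v1 a b t powr q *
      \<bar>\<integral>x\<in>{t..inv_into {0<..} a t}. g x / V1fun q v1 a b x \<partial>lborel\<bar> powr q) \<partial>lborel)"

definition loc_L1 :: "(real \<Rightarrow> real) \<Rightarrow> bool" where
  "loc_L1 g \<longleftrightarrow> loc_Lr 1 g"

definition in_W :: "real \<Rightarrow> (real \<Rightarrow> real) \<Rightarrow> (real \<Rightarrow> real) \<Rightarrow> (real \<Rightarrow> real) \<Rightarrow> (real \<Rightarrow> real) \<Rightarrow> bool" where
  "in_W q v1 a b g \<longleftrightarrow> loc_L1 g \<and> GG q v1 a b g + GGc q v1 a b g < \<infinity>"

end

theory Submission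
  imports Defs
begin

(* For t > 0 both inner integrals run over [t, a^-1 t], i.e. over the x with a x <= t <= x.
   Since a x and b x split the v1^-p' mass V x of [a x, b x] into two halves, V is doubling
   along such pairs, so both inner integrals are bounded by a constant times
   S t = int_t^(a^-1 t) |g|.  Hoelder's inequality on [t, y], y = a^-1 t, together with the
   normalisation ||1/v1||_p' * ||v0||_p = 1 on [a y, b y] gives
   (S t)^p' <= int_t^y |g/v0|^p' / V y <= int_t^y |g/v0|^p'(x) * 2 / V x dx.
   Integrating against v1^-p'(t) dt and exchanging the order of integration gives back
   int |g/v0|^p', because int_(a x)^x v1^-p' = V x / 2.  The constants are 1/2 for GG and
   2 for GGc. *)

section \<open>Hoelder's inequality\<close>

lemma Youngs_inequality_scaled:
  fixes p q l x y :: real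
  assumes pq: "p > 1" "q > 1" "1/p + 1/q = 1" and "l > 0" "x \<ge> 0" "y \<ge> 0"
  shows "x * y \<le> l powr p / p * x powr p + l powr (-q) / q * y powr q"
proof -
  have "x * y = (l * x) * (y / l)" using \<open>l > 0\<close> by simp
  also have "\<dots> \<le> (l * x) powr p / p + (y / l) powr q / q"
    using assms by (intro Youngs_inequality) auto
  also have "\<dots> = l powr p / p * x powr p + l powr (-q) / q * y powr q"
    using assms by (simp add: powr_mult powr_divide powr_minus_divide)
  finally show ?thesis .
qed

lemma le_Young_optimum:
  fixes p q A B X :: real
  assumes pq: "p > 1" "q > 1" "1/p + 1/q = 1" and "A \<ge> 0" "B \<ge> 0"
    and bound: "\<And>l. l > 0 \<Longrightarrow> X \<le> l powr p / p * A + l powr (-q) / q * B"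
  shows "X \<le> A powr (1/p) * B powr (1/q)"
proof (cases "A = 0 \<or> B = 0")
  case True
  have "X \<le> 0"
  proof (cases "A = 0")
    case True
    have "((\<lambda>l. l powr (-q) / q * B) \<longlongrightarrow> 0) at_top"
      using pq by (intro tendsto_mult_left_zero tendsto_divide_zero tendsto_neg_powr filterlim_ident) auto
    then show ?thesis
      using bound True by (intro tendsto_lowerbound[where F = at_top])
        (auto simp: eventually_at_top_dense intro!: exI[of _ 0])
  next
    case False
    with \<open>A = 0 \<or> B = 0\<close> have "B = 0" by simp
    have "((\<lambda>l. l powr p / p * A) \<longlongrightarrow> 0) (at_right 0)"
      using pq by (intro tendsto_mult_left_zero tendsto_divide_zero tendsto_zero_powrI)
        (auto simp: eventually_at_right_less tendsto_ident_at eventually_at_right_field intro!: exI[of _ 1])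
    then show ?thesis
      using bound \<open>B = 0\<close> by (intro tendsto_lowerbound[where F = "at_right 0"])
        (auto simp: eventually_at_right_field intro!: exI[of _ 1])
  qed
  with True show ?thesis using pq by auto
next
  case False
  with assms have A: "A > 0" and B: "B > 0" by auto
  define l where "l = (B / A) powr (1 / (p * q))"
  have "l powr p * A = B powr (1/q) * A powr (1 - 1/q)"
    using A B pq by (simp add: l_def powr_powr powr_divide powr_diff)
  moreover have "l powr (-q) * B = A powr (1/p) * B powr (1 - 1/p)"
    using A B pq by (simp add: l_def powr_powr powr_divide powr_diff powr_minus_divide)
  moreover have "1 - 1/q = 1/p" "1 - 1/p = 1/q" using pq by simp_all
  ultimately have "X \<le> A powr (1/p) * B powr (1/q) / p + A powr (1/p) * B powr (1/q) / q"
    using bound[of l] A B by (simp add: l_def mult.commute)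
  also have "\<dots> = A powr (1/p) * B powr (1/q) * (1/p + 1/q)"
    by (simp add: distrib_left)
  finally show ?thesis using pq by simp
qed

lemma nn_integral_mult_le_Young:
  fixes f g :: "'a \<Rightarrow> real"
  assumes pq: "p > 1" "q > 1" "1/p + 1/q = 1" and "l > 0"
    and [measurable]: "f \<in> borel_measurable M" "g \<in> borel_measurable M"
    and nonneg: "\<And>x. 0 \<le> f x" "\<And>x. 0 \<le> g x"
  shows "(\<integral>\<^sup>+x. ennreal (f x * g x) \<partial>M) \<le> ennreal (l powr p / p) * (\<integral>\<^sup>+x. ennreal (f x powr p) \<partial>M)
    + ennreal (l powr (-q) / q) * (\<integral>\<^sup>+x. ennreal (g x powr q) \<partial>M)"
proof -
  have "(\<integral>\<^sup>+x. ennreal (f x * g x) \<partial>M) \<le> (\<integral>\<^sup>+x. ennreal (l powr p / p) * ennreal (f x powr p)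
      + ennreal (l powr (-q) / q) * ennreal (g x powr q) \<partial>M)"
  proof (intro nn_integral_mono)
    fix x
    have "ennreal (f x * g x) \<le> ennreal (l powr p / p * f x powr p + l powr (-q) / q * g x powr q)"
      using pq \<open>l > 0\<close> nonneg by (intro ennreal_leI Youngs_inequality_scaled)
    also have "\<dots> = ennreal (l powr p / p) * ennreal (f x powr p)
        + ennreal (l powr (-q) / q) * ennreal (g x powr q)"
      using pq by (simp add: ennreal_mult''[symmetric])
    finally show "ennreal (f x * g x) \<le> \<dots>" .
  qed
  also have "\<dots> = ennreal (l powr p / p) * (\<integral>\<^sup>+x. ennreal (f x powr p) \<partial>M)
      + ennreal (l powr (-q) / q) * (\<integral>\<^sup>+x. ennreal (g x powr q) \<partial>M)"
    by (simp add: nn_integral_add nn_integral_cmult)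
  finally show ?thesis .
qed

lemma nn_integral_Holder:
  fixes f g :: "'a \<Rightarrow> real"
  assumes pq: "p > 1" "q > 1" "1/p + 1/q = 1"
    and meas [measurable]: "f \<in> borel_measurable M" "g \<in> borel_measurable M"
    and nonneg: "\<And>x. 0 \<le> f x" "\<And>x. 0 \<le> g x"
    and A: "(\<integral>\<^sup>+x. ennreal (f x powr p) \<partial>M) \<le> ennreal A" and "0 \<le> A"
    and B: "(\<integral>\<^sup>+x. ennreal (g x powr q) \<partial>M) \<le> ennreal B" and "0 \<le> B"
  shows "(\<integral>\<^sup>+x. ennreal (f x * g x) \<partial>M) \<le> ennreal (A powr (1/p) * B powr (1/q))"
proof -
  have bound: "(\<integral>\<^sup>+x. ennreal (f x * g x) \<partial>M) \<le> ennreal (l powr p / p * A + l powr (-q) / q * B)"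
    if "l > 0" for l
  proof -
    have "(\<integral>\<^sup>+x. ennreal (f x * g x) \<partial>M) \<le> ennreal (l powr p / p) * (\<integral>\<^sup>+x. ennreal (f x powr p) \<partial>M)
        + ennreal (l powr (-q) / q) * (\<integral>\<^sup>+x. ennreal (g x powr q) \<partial>M)"
      by (rule nn_integral_mult_le_Young[OF pq that meas nonneg])
    also have "\<dots> \<le> ennreal (l powr p / p) * ennreal A + ennreal (l powr (-q) / q) * ennreal B"
      using A B by (intro add_mono mult_left_mono) auto
    also have "\<dots> = ennreal (l powr p / p * A + l powr (-q) / q * B)"
      using pq \<open>0 \<le> A\<close> \<open>0 \<le> B\<close> by (simp add: ennreal_mult''[symmetric])
    finally show ?thesis .
  qed
  then obtain X where X: "(\<integral>\<^sup>+x. ennreal (f x * g x) \<partial>M) = ennreal X" "0 \<le> X"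
    using bound[of 1] by (cases "\<integral>\<^sup>+x. ennreal (f x * g x) \<partial>M") (auto simp: top_unique)
  have "X \<le> A powr (1/p) * B powr (1/q)"
    using pq \<open>0 \<le> A\<close> \<open>0 \<le> B\<close>
  proof (rule le_Young_optimum)
    fix l :: real assume "l > 0"
    have "0 \<le> l powr p / p * A + l powr (-q) / q * B"
      using pq \<open>0 \<le> A\<close> \<open>0 \<le> B\<close> by (intro add_nonneg_nonneg mult_nonneg_nonneg) auto
    with bound[OF \<open>l > 0\<close>] X show "X \<le> l powr p / p * A + l powr (-q) / q * B"
      by simp
  qed
  with X show ?thesis by (simp add: ennreal_leI)
qed

definition Lnorm_inv_integrand :: "real \<Rightarrow> ('a \<Rightarrow> real) \<Rightarrow> ('a \<Rightarrow> real) \<Rightarrow> 'a \<Rightarrow> ennreal" where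
  "Lnorm_inv_integrand r v h x =
     (if v x = 0 then (if h x = 0 then 0 else \<infinity>) else ennreal (\<bar>h x / v x\<bar> powr r))"

lemma Lnorm_inv_eq_integrand:
  "Lnorm_inv r v h A = enn_rt r (\<integral>\<^sup>+x\<in>A. Lnorm_inv_integrand r v h x \<partial>lborel)"
  by (simp add: Lnorm_inv_def Lnorm_inv_integrand_def)

lemma borel_measurable_Lnorm_inv_integrand [measurable]:
  assumes [measurable]: "v \<in> borel_measurable M" "h \<in> borel_measurable M"
  shows "Lnorm_inv_integrand r v h \<in> borel_measurable M"
  unfolding Lnorm_inv_integrand_def by measurable

lemma set_nn_integral_weighted_Holder:
  fixes g v :: "'a \<Rightarrow> real"
  assumes pq: "p > 1" "q > 1" "1/p + 1/q = 1"
    and [measurable]: "g \<in> borel_measurable M" "v \<in> borel_measurable M" "S \<in> sets M"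
    and A: "(\<integral>\<^sup>+x\<in>S. Lnorm_inv_integrand q v g x \<partial>M) \<le> ennreal A" and "0 \<le> A"
    and B: "(\<integral>\<^sup>+x\<in>S. ennreal (\<bar>v x\<bar> powr p) \<partial>M) \<le> ennreal B" and "0 \<le> B"
  shows "(\<integral>\<^sup>+x\<in>S. ennreal \<bar>g x\<bar> \<partial>M) \<le> ennreal (A powr (1/q) * B powr (1/p))"
proof -
  define f where "f x = (if v x = 0 then 0 else \<bar>g x / v x\<bar>)" for x
  have [measurable]: "f \<in> borel_measurable M" unfolding f_def by measurable
  have restrict: "(\<integral>\<^sup>+x. F x \<partial>restrict_space M S) = (\<integral>\<^sup>+x\<in>S. F x \<partial>M)" for F
    by (rule nn_integral_restrict_space) (simp add: sets.Int_space_eq2)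
  have "AE x in M. Lnorm_inv_integrand q v g x * indicator S x \<noteq> \<infinity>"
    using A by (intro nn_integral_PInf_AE) (measurable, auto simp: top_unique)
  then have "AE x in M. ennreal \<bar>g x\<bar> * indicator S x = ennreal (f x * \<bar>v x\<bar>) * indicator S x"
    by eventually_elim
      (auto simp: f_def Lnorm_inv_integrand_def split: if_splits split_indicator)
  then have "(\<integral>\<^sup>+x\<in>S. ennreal \<bar>g x\<bar> \<partial>M) = (\<integral>\<^sup>+x. ennreal (f x * \<bar>v x\<bar>) \<partial>restrict_space M S)"
    unfolding restrict by (rule nn_integral_cong_AE)
  also have "\<dots> \<le> ennreal (A powr (1/q) * B powr (1/p))"
  proof (rule nn_integral_Holder[where p = q and q = p])
    have "(\<integral>\<^sup>+x\<in>S. ennreal (f x powr q) \<partial>M) \<le> (\<integral>\<^sup>+x\<in>S. Lnorm_inv_integrand q v g x \<partial>M)"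
      by (intro nn_integral_mono mult_right_mono) (auto simp: f_def Lnorm_inv_integrand_def)
    then show "(\<integral>\<^sup>+x. ennreal (f x powr q) \<partial>restrict_space M S) \<le> ennreal A"
      unfolding restrict using A by (rule order_trans)
    show "(\<integral>\<^sup>+x. ennreal (\<bar>v x\<bar> powr p) \<partial>restrict_space M S) \<le> ennreal B"
      unfolding restrict by (rule B)
    show "f \<in> borel_measurable (restrict_space M S)" "(\<lambda>x. \<bar>v x\<bar>) \<in> borel_measurable (restrict_space M S)"
      by (auto intro: measurable_restrict_space1)
  qed (use pq \<open>0 \<le> A\<close> \<open>0 \<le> B\<close> in \<open>auto simp: f_def\<close>)
  finally show ?thesis .
qed

lemma enn_rt_ennreal: "0 \<le> x \<Longrightarrow> enn_rt r (ennreal x) = ennreal (x powr (1/r))"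
  by (simp add: enn_rt_def)

lemma enn_rt_less_top_iff: "enn_rt r X < top \<longleftrightarrow> X < top"
  by (simp add: enn_rt_def less_top[symmetric])

lemma enn_rt_le_ennreal:
  assumes "0 < r" "0 \<le> c" "0 \<le> n" and X: "X \<le> ennreal (c powr r * n)"
  shows "enn_rt r X \<le> ennreal (c * n powr (1/r))"
proof -
  obtain x where x: "X = ennreal x" "0 \<le> x"
    using X by (cases X) (auto simp: top_unique)
  with assms have "x \<le> c powr r * n" by simp
  then have "x powr (1/r) \<le> (c powr r * n) powr (1/r)"
    using assms x by (intro powr_mono2) auto
  also have "\<dots> = c * n powr (1/r)"
    using assms by (simp add: powr_mult powr_powr)
  finally show ?thesis using x by (simp add: enn_rt_ennreal ennreal_leI)
qed

lemma abs_set_integral_le_set_nn_integral: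
  fixes f :: "'a \<Rightarrow> real"
  shows "ennreal \<bar>LINT x:A|M. f x\<bar> \<le> (\<integral>\<^sup>+x\<in>A. ennreal \<bar>f x\<bar> \<partial>M)"
proof (cases "set_integrable M A f")
  case True
  then have "ennreal (norm (LINT x:A|M. f x)) \<le> (\<integral>\<^sup>+x. norm (indicator A x *\<^sub>R f x) \<partial>M)"
    unfolding set_lebesgue_integral_def set_integrable_def by (rule integral_norm_bound_ennreal)
  also have "\<dots> = (\<integral>\<^sup>+x\<in>A. ennreal \<bar>f x\<bar> \<partial>M)"
    by (intro nn_integral_cong) (simp split: split_indicator)
  finally show ?thesis by simp
next
  case False
  then show ?thesis
    by (simp add: set_lebesgue_integral_def set_integrable_def not_integrable_integral_eq)
qed

lemma abs_set_integral_le_dominated: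
  fixes f h :: "'a \<Rightarrow> real"
  assumes [measurable]: "A \<in> sets M" "h \<in> borel_measurable M"
    and dom: "\<And>x. x \<in> A \<Longrightarrow> \<bar>f x\<bar> \<le> c * \<bar>h x\<bar>" and "0 \<le> c"
    and h: "(\<integral>\<^sup>+x\<in>A. ennreal \<bar>h x\<bar> \<partial>M) = ennreal s" and "0 \<le> s"
  shows "\<bar>LINT x:A|M. f x\<bar> \<le> c * s"
proof -
  have "ennreal \<bar>LINT x:A|M. f x\<bar> \<le> (\<integral>\<^sup>+x\<in>A. ennreal \<bar>f x\<bar> \<partial>M)"
    by (rule abs_set_integral_le_set_nn_integral)
  also have "\<dots> \<le> (\<integral>\<^sup>+x. ennreal c * (ennreal \<bar>h x\<bar> * indicator A x) \<partial>M)"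
    using dom \<open>0 \<le> c\<close>
    by (intro nn_integral_mono) (auto simp: ennreal_mult'[symmetric] ennreal_leI split: split_indicator)
  also have "\<dots> = ennreal (c * s)"
    using h \<open>0 \<le> c\<close> by (simp add: nn_integral_cmult ennreal_mult')
  finally show ?thesis using \<open>0 \<le> c\<close> \<open>0 \<le> s\<close> by simp
qed

lemma set_nn_integral_Icc_split:
  fixes f :: "real \<Rightarrow> ennreal"
  assumes [measurable]: "f \<in> borel_measurable borel" and "s \<le> t" "t \<le> u"
  shows "(\<integral>\<^sup>+x\<in>{s..u}. f x \<partial>lborel) = (\<integral>\<^sup>+x\<in>{s..t}. f x \<partial>lborel) + (\<integral>\<^sup>+x\<in>{t..u}. f x \<partial>lborel)"
proof -
  have "{s..u} = {s..t} \<union> {t<..u}" using assms by auto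
  then have "(\<integral>\<^sup>+x\<in>{s..u}. f x \<partial>lborel) = (\<integral>\<^sup>+x\<in>{s..t} \<union> {t<..u}. f x \<partial>lborel)"
    by simp
  also have "\<dots> = (\<integral>\<^sup>+x\<in>{s..t}. f x \<partial>lborel) + (\<integral>\<^sup>+x\<in>{t<..u}. f x \<partial>lborel)"
    by (rule nn_integral_disjoint_pair) auto
  also have "(\<integral>\<^sup>+x\<in>{t<..u}. f x \<partial>lborel) = (\<integral>\<^sup>+x\<in>{t..u}. f x \<partial>lborel)"
    using AE_lborel_singleton[of t] by (intro nn_integral_cong_AE) (auto split: split_indicator)
  finally show ?thesis .
qed

lemma abs_cont_on_imp_continuous_on:
  assumes "connected S" "abs_cont_on S f"
  shows "continuous_on S f"
  unfolding continuous_on_iff dist_real_def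
proof (intro ballI allI impI)
  fix z e :: real assume "z \<in> S" "e > 0"
  from assms(2)[unfolded abs_cont_on_def, rule_format, OF this(2)]
  obtain d where "d > 0" and d: "\<forall>(n::nat) l r. (\<forall>i<n. l i \<le> r i \<and> {l i..r i} \<subseteq> S) \<and>
      (\<forall>i<n. \<forall>j<n. i \<noteq> j \<longrightarrow> r i \<le> l j \<or> r j \<le> l i) \<and> (\<Sum>i<n. r i - l i) < d \<longrightarrow>
      (\<Sum>i<n. \<bar>f (r i) - f (l i)\<bar>) < e"
    by blast
  show "\<exists>d>0. \<forall>x'\<in>S. \<bar>x' - z\<bar> < d \<longrightarrow> \<bar>f x' - f z\<bar> < e"
  proof (intro exI[of _ d] conjI ballI impI)
    fix x' assume "x' \<in> S" "\<bar>x' - z\<bar> < d"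
    have "min x' z \<in> S" "max x' z \<in> S"
      using \<open>x' \<in> S\<close> \<open>z \<in> S\<close> by (simp_all add: min_def max_def)
    then have "{min x' z..max x' z} \<subseteq> S"
      by (rule connected_contains_Icc[OF assms(1)])
    moreover have "max x' z - min x' z < d"
      using \<open>\<bar>x' - z\<bar> < d\<close> by (simp add: max_def min_def abs_if split: if_splits)
    ultimately have "(\<Sum>i<Suc 0. \<bar>f ((\<lambda>_. max x' z) i) - f ((\<lambda>_. min x' z) i)\<bar>) < e"
      using d[rule_format, of "Suc 0" "\<lambda>_. min x' z" "\<lambda>_. max x' z"] by simp
    moreover have "\<bar>f x' - f z\<bar> = \<bar>f (max x' z) - f (min x' z)\<bar>"
      by (cases "x' \<le> z") (simp_all add: min_def max_def abs_minus_commute)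
    ultimately show "\<bar>f x' - f z\<bar> < e" by simp
  qed (fact \<open>d > 0\<close>)
qed

lemma loc_abs_cont_imp_continuous_on:
  assumes "loc_abs_cont f"
  shows "continuous_on {0<..} f"
proof (intro continuous_at_imp_continuous_on ballI)
  fix z :: real assume "z \<in> {0<..}"
  then have "continuous_on {z/2..2*z} f"
    using assms by (intro abs_cont_on_imp_continuous_on) (auto simp: loc_abs_cont_def)
  moreover have "z \<in> interior {z/2..2*z}" using \<open>z \<in> {0<..}\<close> by auto
  ultimately show "isCont f z" by (rule continuous_on_interior)
qed

lemma greaterThan_0_subset_image:
  fixes f :: "real \<Rightarrow> real"
  assumes "continuous_on {0<..} f" "(f \<longlongrightarrow> 0) (at_right 0)" "filterlim f at_top at_top"
  shows "{0<..} \<subseteq> f ` {0<..}"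
proof
  fix t :: real assume "t \<in> {0<..}"
  have "eventually (\<lambda>s. 0 < s \<and> f s < t) (at_right 0)"
    using \<open>t \<in> {0<..}\<close> assms(2)
    by (intro eventually_conj eventually_at_right_less order_tendstoD(2)) auto
  then obtain s1 where s1: "0 < s1" "f s1 < t"
    using eventually_happens'[of "at_right (0::real)"] by auto
  have "eventually (\<lambda>s. s1 \<le> s \<and> t < f s) at_top"
    using assms(3) by (intro eventually_conj eventually_ge_at_top) (simp add: filterlim_at_top_dense)
  then obtain s2 where s2: "s1 \<le> s2" "t < f s2"
    using eventually_happens'[of "at_top :: real filter"] by auto
  have "continuous_on {s1..s2} f"
    by (rule continuous_on_subset[OF assms(1)]) (use s1 in auto)
  then obtain x where "s1 \<le> x" "f x = t"
    using IVT'[of f s1 t s2] s1 s2 by auto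
  with s1 show "t \<in> f ` {0<..}" by force
qed

lemma borel_measurable_mono_on_if:
  fixes f :: "real \<Rightarrow> real"
  assumes "A \<in> sets borel" "mono_on A f"
  shows "(\<lambda>x. if x \<in> A then f x else 0) \<in> borel_measurable borel"
proof -
  have "f \<in> borel_measurable (restrict_space borel A)"
    using assms(2) by (rule borel_measurable_mono_on_fnc)
  then have "(\<lambda>x. indicator A x *\<^sub>R f x) \<in> borel_measurable borel"
    using assms(1) by (subst (asm) borel_measurable_restrict_space_iff) auto
  moreover have "(\<lambda>x. indicator A x *\<^sub>R f x) = (\<lambda>x. if x \<in> A then f x else 0)"
    by (auto simp: indicator_def)
  ultimately show ?thesis by simp
qed

section \<open>The halving functions a and b\<close>

lemma wgt_nonneg: "0 \<le> wgt q v x"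
  by (simp add: wgt_def)

locale ab_weights =
  fixes p q :: real and v0 v1 a b :: "real \<Rightarrow> real"
  assumes p_gt_1: "1 < p" and q_def: "q = p / (p - 1)"
    and v0_borel [measurable]: "v0 \<in> borel_measurable lborel"
    and v1_borel [measurable]: "v1 \<in> borel_measurable lborel"
    and v1_nonneg: "\<And>x. 0 \<le> v1 x"
    and v0_loc: "\<And>x y. 0 < x \<Longrightarrow> x \<le> y \<Longrightarrow> Lnorm p v0 {x..y} < \<infinity>"
    and v1_inv_loc: "loc_Lr_inv q v1"
    and ab: "ab_funcs p v0 v1 a b"
begin

lemma q_gt_1: "1 < q"
  using p_gt_1 by (simp add: q_def less_divide_eq)

lemma conjugate_exponents: "1/p + 1/q = 1"
  using p_gt_1 by (simp add: q_def field_simps)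

lemma a_strict_mono: "strict_mono_on {0<..} a"
  using ab by (simp add: ab_funcs_def)

lemma b_mono: "0 < x \<Longrightarrow> x \<le> y \<Longrightarrow> b x \<le> b y"
  using ab by (auto simp: ab_funcs_def intro: strict_mono_on_leD)

lemma ab_bounds: "0 < t \<Longrightarrow> 0 < a t \<and> a t < t \<and> t < b t"
  using ab unfolding ab_funcs_def by blast

lemma wgt_borel [measurable]: "wgt q v1 \<in> borel_measurable lborel"
  unfolding wgt_def by measurable

definition W :: "real \<Rightarrow> real \<Rightarrow> ennreal" where
  "W s t = (\<integral>\<^sup>+x\<in>{s..t}. ennreal (wgt q v1 x) \<partial>lborel)"

abbreviation V :: "real \<Rightarrow> real" where
  "V \<equiv> V1fun q v1 a b"

lemma W_balance: "0 < t \<Longrightarrow> W (a t) t = W t (b t)"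
  using ab unfolding ab_funcs_def W_def q_def[symmetric] by blast

lemma norm_product_eq_1:
  "0 < t \<Longrightarrow> Lnorm_inv q v1 (\<lambda>_. 1) {a t..b t} * Lnorm p v0 {a t..b t} = 1"
  using ab by (simp add: ab_funcs_def q_def)

lemma Iw_eq_W: "Iw q v1 s t = enn2real (W s t)"
proof -
  have "Iw q v1 s t = enn2real (\<integral>\<^sup>+x. ennreal (indicator {s..t} x *\<^sub>R wgt q v1 x) \<partial>lborel)"
    unfolding Iw_def set_lebesgue_integral_def
    by (rule integral_eq_nn_integral) (auto simp: wgt_def)
  also have "(\<integral>\<^sup>+x. ennreal (indicator {s..t} x *\<^sub>R wgt q v1 x) \<partial>lborel) = W s t"
    unfolding W_def by (intro nn_integral_cong) (simp split: split_indicator)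
  finally show ?thesis .
qed

lemma V_eq: "V x = enn2real (W (a x) (b x))"
  by (simp add: V1fun_def Iw_eq_W)

lemma V_nonneg: "0 \<le> V x"
  by (simp add: V_eq)

lemma W_split: "s \<le> t \<Longrightarrow> t \<le> u \<Longrightarrow> W s u = W s t + W t u"
  unfolding W_def by (rule set_nn_integral_Icc_split) auto

lemma W_mono: "s' \<le> s \<Longrightarrow> t \<le> t' \<Longrightarrow> W s t \<le> W s' t'"
  unfolding W_def by (rule nn_set_integral_set_mono) auto

lemma v1_inv_integral_less_top:
  assumes "0 < s"
  shows "(\<integral>\<^sup>+x\<in>{s..t}. Lnorm_inv_integrand q v1 (\<lambda>_. 1) x \<partial>lborel) < \<infinity>"
proof (cases "s \<le> t")
  case True
  with assms v1_inv_loc have "Lnorm_inv q v1 (\<lambda>_. 1) {s..t} < \<infinity>"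
    by (simp add: loc_Lr_inv_def)
  then show ?thesis
    by (simp add: Lnorm_inv_eq_integrand enn_rt_less_top_iff)
qed simp

lemma W_le_v1_inv_integral:
  "W s t \<le> (\<integral>\<^sup>+x\<in>{s..t}. Lnorm_inv_integrand q v1 (\<lambda>_. 1) x \<partial>lborel)"
  unfolding W_def using v1_nonneg
  by (intro nn_integral_mono) (auto simp: wgt_def Lnorm_inv_integrand_def split: split_indicator)

lemma W_less_top: "0 < s \<Longrightarrow> W s t < \<infinity>"
  using W_le_v1_inv_integral v1_inv_integral_less_top by (rule le_less_trans)

lemma W_pos:
  assumes "0 < s" "s < t"
  shows "0 < W s t"
proof (rule ccontr)
  assume "\<not> 0 < W s t"
  then have "AE x in lborel. ennreal (wgt q v1 x) * indicator {s..t} x = 0"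
    by (simp add: W_def nn_integral_0_iff_AE)
  moreover have "AE x in lborel. Lnorm_inv_integrand q v1 (\<lambda>_. 1) x * indicator {s..t} x \<noteq> \<infinity>"
    using v1_inv_integral_less_top[OF \<open>0 < s\<close>, of t] by (intro nn_integral_PInf_AE) auto
  ultimately have "AE x in lborel. x \<notin> {s..t}"
    by eventually_elim
      (use v1_nonneg in \<open>auto simp: wgt_def Lnorm_inv_integrand_def order_le_less split: split_indicator\<close>)
  then have "emeasure lborel {s..t} = 0"
    by (subst (asm) AE_iff_measurable[of "{s..t}"]) auto
  with \<open>s < t\<close> show False by simp
qed

lemma W_half:
  assumes "0 < x"
  shows "W (a x) x = ennreal (V x / 2)" and "W x (b x) = ennreal (V x / 2)"
proof -
  obtain h where h: "W (a x) x = ennreal h" "0 \<le> h"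
    using W_less_top[of "a x" x] ab_bounds[OF assms] by (cases "W (a x) x") auto
  have "W (a x) (b x) = W (a x) x + W x (b x)"
    using ab_bounds[OF assms] by (intro W_split) auto
  also have "\<dots> = ennreal (2 * h)"
    using h W_balance[OF assms] by (simp flip: ennreal_plus)
  finally have "V x = 2 * h"
    using h by (simp add: V_eq)
  then show "W (a x) x = ennreal (V x / 2)" "W x (b x) = ennreal (V x / 2)"
    using h W_balance[OF assms] by simp_all
qed

lemma V_pos: "0 < x \<Longrightarrow> 0 < V x"
  using W_pos[of "a x" x] W_half(1)[of x] ab_bounds[of x] by simp

lemma V_doubling:
  assumes "0 < x" "x \<le> y" "a y \<le> x"
  shows "V x \<le> 2 * V y"
proof -
  have "0 < y" using assms by simp
  have "ennreal (V x / 2) = W x (b x)"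
    using W_half(2)[OF \<open>0 < x\<close>] by simp
  also have "\<dots> \<le> W x (b y)"
    using b_mono[OF assms(1,2)] by (intro W_mono) auto
  also have "\<dots> = W x y + W y (b y)"
    using ab_bounds[OF \<open>0 < y\<close>] assms by (intro W_split) auto
  also have "\<dots> \<le> W (a y) y + W y (b y)"
    using assms by (intro add_mono W_mono) auto
  also have "\<dots> = ennreal (V y)"
    using W_half[OF \<open>0 < y\<close>] V_nonneg[of y] by (simp flip: ennreal_plus)
  finally show ?thesis
    using V_nonneg[of y] by simp
qed

lemma v0_power_integral_less_top:
  "0 < s \<Longrightarrow> s \<le> t \<Longrightarrow> (\<integral>\<^sup>+x\<in>{s..t}. ennreal (\<bar>v0 x\<bar> powr p) \<partial>lborel) < \<infinity>"
  using v0_loc by (simp add: Lnorm_def enn_rt_less_top_iff)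

lemma v0_power_integral_le:
  assumes "0 < x"
  shows "(\<integral>\<^sup>+s\<in>{a x..b x}. ennreal (\<bar>v0 s\<bar> powr p) \<partial>lborel) \<le> ennreal (V x powr (1 - p))"
proof -
  have ab_x: "0 < a x" "a x \<le> b x" using ab_bounds[OF assms] by auto
  obtain i where i: "(\<integral>\<^sup>+s\<in>{a x..b x}. Lnorm_inv_integrand q v1 (\<lambda>_. 1) s \<partial>lborel) = ennreal i" "0 \<le> i"
    using v1_inv_integral_less_top[OF ab_x(1)] by (auto simp: less_top_ennreal)
  obtain P where P: "(\<integral>\<^sup>+s\<in>{a x..b x}. ennreal (\<bar>v0 s\<bar> powr p) \<partial>lborel) = ennreal P" "0 \<le> P"
    using v0_power_integral_less_top[OF ab_x] by (auto simp: less_top_ennreal)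
  have "ennreal (V x) \<le> ennreal i"
    using W_le_v1_inv_integral[of "a x" "b x"] W_less_top[OF ab_x(1)] i by (simp add: V_eq)
  with i have V_le_i: "V x \<le> i" by simp
  have V_x_pos: "0 < V x" using V_pos[OF assms] .
  have "ennreal (i powr (1/q)) * ennreal (P powr (1/p)) = 1"
    using norm_product_eq_1[OF assms] i P by (simp add: Lnorm_inv_eq_integrand Lnorm_def enn_rt_ennreal)
  then have "i powr (1/q) * P powr (1/p) = 1"
    by (simp flip: ennreal_mult)
  moreover have "0 < i" using V_x_pos V_le_i by simp
  ultimately have P_root: "P powr (1/p) = i powr (- (1/q))"
    by (simp add: powr_minus_divide eq_divide_eq mult.commute)
  have exponent: "- (1/q) * p = 1 - p"
    using p_gt_1 by (simp add: q_def field_simps)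
  have "P = (P powr (1/p)) powr p"
    using P(2) p_gt_1 by (simp add: powr_powr)
  also have "\<dots> = i powr (- (1/q) * p)"
    by (simp add: P_root powr_powr)
  also have "\<dots> = i powr (1 - p)"
    by (simp only: exponent)
  also have "\<dots> \<le> V x powr (1 - p)"
    using p_gt_1 V_x_pos V_le_i by (intro powr_mono2') auto
  finally show ?thesis using P by (simp add: ennreal_leI)
qed

lemma a_inv:
  assumes "0 < t"
  shows "0 < inv_into {0<..} a t" "a (inv_into {0<..} a t) = t" "t < inv_into {0<..} a t"
proof -
  have "continuous_on {0<..} a"
    using ab by (intro loc_abs_cont_imp_continuous_on) (simp add: ab_funcs_def)
  then have "t \<in> a ` {0<..}"
    using ab assms greaterThan_0_subset_image[of a] by (auto simp: ab_funcs_def)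
  then show "0 < inv_into {0<..} a t" "a (inv_into {0<..} a t) = t"
    using inv_into_into[OF \<open>t \<in> a ` {0<..}\<close>] f_inv_into_f[OF \<open>t \<in> a ` {0<..}\<close>] by auto
  then show "t < inv_into {0<..} a t"
    using ab_bounds[of "inv_into {0<..} a t"] by simp
qed

lemma le_a_inv_iff: "0 < t \<Longrightarrow> 0 < x \<Longrightarrow> x \<le> inv_into {0<..} a t \<longleftrightarrow> a x \<le> t"
  using strict_mono_on_less_eq[OF a_strict_mono, of x "inv_into {0<..} a t"] a_inv[of t] by auto

definition a_ext :: "real \<Rightarrow> real" where
  "a_ext x = (if x \<in> {0<..} then a x else 0)"

lemma a_ext_borel [measurable]: "a_ext \<in> borel_measurable lborel"
  unfolding a_ext_def measurable_lborel2
  by (rule borel_measurable_mono_on_if) (auto intro: strict_mono_on_imp_mono_on a_strict_mono)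

lemma W_a_ext_borel [measurable]: "(\<lambda>x. W (a_ext x) x) \<in> borel_measurable lborel"
proof -
  have "(\<lambda>x. W (a_ext x) x) =
      (\<lambda>x. \<integral>\<^sup>+y. (if a_ext x \<le> y \<and> y \<le> x then ennreal (wgt q v1 y) else 0) \<partial>lborel)"
    unfolding W_def by (intro ext nn_integral_cong) (simp split: split_indicator)
  also have "\<dots> \<in> borel_measurable lborel"
    by measurable
  finally show ?thesis .
qed

end

section \<open>Estimates for the functionals\<close>

locale ab_weights_function = ab_weights +
  fixes g :: "real \<Rightarrow> real"
  assumes g_borel [measurable]: "g \<in> borel_measurable lborel"
    and g_norm_finite: "Lnorm_inv q v0 g {0<..} < \<infinity>"
begin

abbreviation G :: "real \<Rightarrow> ennreal" where
  "G \<equiv> Lnorm_inv_integrand q v0 g"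

definition N :: real where
  "N = enn2real (\<integral>\<^sup>+x\<in>{0<..}. G x \<partial>lborel)"

lemma G_integral_eq_N: "(\<integral>\<^sup>+x\<in>{0<..}. G x \<partial>lborel) = ennreal N"
  using g_norm_finite by (simp add: N_def Lnorm_inv_eq_integrand enn_rt_less_top_iff)

lemma N_nonneg: "0 \<le> N"
  by (simp add: N_def)

lemma Lnorm_inv_g_eq_N: "Lnorm_inv q v0 g {0<..} = ennreal (N powr (1/q))"
  by (simp add: Lnorm_inv_eq_integrand G_integral_eq_N enn_rt_ennreal N_nonneg)

lemma G_integral_less_top:
  assumes "S \<subseteq> {0<..}"
  shows "(\<integral>\<^sup>+x\<in>S. G x \<partial>lborel) < \<infinity>"
proof -
  have "(\<integral>\<^sup>+x\<in>S. G x \<partial>lborel) \<le> (\<integral>\<^sup>+x\<in>{0<..}. G x \<partial>lborel)"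
    using assms by (rule nn_set_integral_set_mono)
  then show ?thesis
    by (simp add: G_integral_eq_N le_less_trans[OF _ ennreal_less_top])
qed

lemma g_local_Holder:
  assumes "0 < s" "s \<le> t"
  shows "(\<integral>\<^sup>+x\<in>{s..t}. ennreal \<bar>g x\<bar> \<partial>lborel)
    \<le> ennreal (enn2real (\<integral>\<^sup>+x\<in>{s..t}. G x \<partial>lborel) powr (1/q)
        * enn2real (\<integral>\<^sup>+x\<in>{s..t}. ennreal (\<bar>v0 x\<bar> powr p) \<partial>lborel) powr (1/p))"
  using p_gt_1 q_gt_1 conjugate_exponents
proof (rule set_nn_integral_weighted_Holder)
  show "(\<integral>\<^sup>+x\<in>{s..t}. G x \<partial>lborel) \<le> ennreal (enn2real (\<integral>\<^sup>+x\<in>{s..t}. G x \<partial>lborel))"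
  proof -
    have "(\<integral>\<^sup>+x\<in>{s..t}. G x \<partial>lborel) < \<infinity>"
      using assms by (intro G_integral_less_top) auto
    then show ?thesis by simp
  qed
  show "(\<integral>\<^sup>+x\<in>{s..t}. ennreal (\<bar>v0 x\<bar> powr p) \<partial>lborel)
      \<le> ennreal (enn2real (\<integral>\<^sup>+x\<in>{s..t}. ennreal (\<bar>v0 x\<bar> powr p) \<partial>lborel))"
    using v0_power_integral_less_top[OF assms] by simp
qed (simp_all add: add.commute)

definition S :: "real \<Rightarrow> real" where
  "S t = enn2real (\<integral>\<^sup>+x\<in>{t..inv_into {0<..} a t}. ennreal \<bar>g x\<bar> \<partial>lborel)"

lemma S_nonneg: "0 \<le> S t"
  by (simp add: S_def)

lemma S_eq:
  assumes "0 < t"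
  shows "(\<integral>\<^sup>+x\<in>{t..inv_into {0<..} a t}. ennreal \<bar>g x\<bar> \<partial>lborel) = ennreal (S t)"
proof -
  have "(\<integral>\<^sup>+x\<in>{t..inv_into {0<..} a t}. ennreal \<bar>g x\<bar> \<partial>lborel) < \<infinity>"
    using g_local_Holder[OF assms, of "inv_into {0<..} a t"] a_inv[OF assms]
    by (simp add: le_less_trans[OF _ ennreal_less_top])
  then show ?thesis by (simp add: S_def)
qed

lemma S_pow_le:
  assumes "0 < t"
  defines "y \<equiv> inv_into {0<..} a t"
  shows "S t powr q \<le> enn2real (\<integral>\<^sup>+x\<in>{t..y}. G x \<partial>lborel) / V y"
proof -
  have y: "0 < y" "a y = t" "t < y" using a_inv[OF assms(1)] by (simp_all add: y_def)
  define A where "A = enn2real (\<integral>\<^sup>+x\<in>{t..y}. G x \<partial>lborel)"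
  define B where "B = enn2real (\<integral>\<^sup>+x\<in>{t..y}. ennreal (\<bar>v0 x\<bar> powr p) \<partial>lborel)"
  have "0 \<le> A" "0 \<le> B" "0 < V y" using V_pos[OF y(1)] by (simp_all add: A_def B_def)
  have "(\<integral>\<^sup>+x\<in>{t..y}. ennreal (\<bar>v0 x\<bar> powr p) \<partial>lborel)
      \<le> (\<integral>\<^sup>+x\<in>{a y..b y}. ennreal (\<bar>v0 x\<bar> powr p) \<partial>lborel)"
    using y ab_bounds[OF y(1)] by (intro nn_set_integral_set_mono) auto
  also have "\<dots> \<le> ennreal (V y powr (1 - p))"
    by (rule v0_power_integral_le[OF y(1)])
  finally have B_le: "B \<le> V y powr (1 - p)"
    unfolding B_def by (rule enn2real_leI[rotated]) simp
  have "ennreal (S t) \<le> ennreal (A powr (1/q) * B powr (1/p))"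
    using g_local_Holder[of t y] y S_eq[OF assms(1)] assms(1) by (simp add: A_def B_def y_def)
  then have "S t \<le> A powr (1/q) * B powr (1/p)"
    using \<open>0 \<le> A\<close> \<open>0 \<le> B\<close> by simp
  also have "\<dots> \<le> A powr (1/q) * (V y powr (1 - p)) powr (1/p)"
    using B_le \<open>0 \<le> B\<close> p_gt_1 by (intro mult_left_mono powr_mono2) auto
  also have "(V y powr (1 - p)) powr (1/p) = V y powr (- (1/q))"
    unfolding powr_powr using p_gt_1
    by (intro arg_cong[where f = "(powr) (V y)"]) (simp add: q_def field_simps)
  also have "A powr (1/q) * V y powr (- (1/q)) = (A / V y) powr (1/q)"
    using \<open>0 \<le> A\<close> \<open>0 < V y\<close> by (simp add: powr_divide powr_minus_divide)
  finally have "S t powr q \<le> ((A / V y) powr (1/q)) powr q"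
    using S_nonneg q_gt_1 by (intro powr_mono2) auto
  also have "\<dots> = A / V y"
    using \<open>0 \<le> A\<close> \<open>0 < V y\<close> q_gt_1 by (simp add: powr_powr)
  finally show ?thesis by (simp add: A_def)
qed

(* The factor 1 / W (a x) x is chosen so that Tonelli's theorem turns the wgt-weighted
   integral of Psi back into the integral of G: W (a x) x is exactly the wgt-mass of the
   set of t with a x <= t <= x. *)

definition Psi :: "real \<Rightarrow> ennreal" where
  "Psi t = (\<integral>\<^sup>+x. (if 0 < t \<and> t \<le> x \<and> a_ext x \<le> t then G x / W (a_ext x) x else 0) \<partial>lborel)"

lemma Psi_borel [measurable]: "Psi \<in> borel_measurable lborel"
  unfolding Psi_def by measurable

lemma Psi_eq:
  assumes "0 < t"
  shows "Psi t = (\<integral>\<^sup>+x\<in>{t..inv_into {0<..} a t}. G x / W (a x) x \<partial>lborel)"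
  unfolding Psi_def
  using assms le_a_inv_iff[OF assms] by (intro nn_integral_cong) (auto simp: a_ext_def split: split_indicator)

lemma mem_a_inv_interval:
  assumes "0 < t" "x \<in> {t..inv_into {0<..} a t}"
  shows "0 < x" "a x \<le> t" "t \<le> x"
  using assms le_a_inv_iff[OF assms(1)] by auto

lemma inverse_V_a_inv_le:
  assumes "0 < t" "x \<in> {t..inv_into {0<..} a t}"
  shows "ennreal (1 / V (inv_into {0<..} a t)) \<le> inverse (W (a x) x)"
proof -
  note x = mem_a_inv_interval[OF assms]
  have "V x \<le> 2 * V (inv_into {0<..} a t)"
    using assms x a_inv[OF assms(1)] by (intro V_doubling) auto
  then have "1 / V (inv_into {0<..} a t) \<le> 2 / V x"
    using V_pos[OF x(1)] V_pos[OF a_inv(1)[OF assms(1)]] by (simp add: field_simps)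
  then show ?thesis
    using W_half(1)[OF x(1)] V_pos[OF x(1)] by (simp add: inverse_ennreal ennreal_leI)
qed

lemma S_pow_le_Psi:
  assumes "0 < t"
  shows "ennreal (S t powr q) \<le> Psi t"
proof -
  define y where "y = inv_into {0<..} a t"
  have y: "0 < y" "a y = t" "t < y" using a_inv[OF assms] by (simp_all add: y_def)
  have "0 < V y" using V_pos[OF y(1)] .
  have fin: "(\<integral>\<^sup>+x\<in>{t..y}. G x \<partial>lborel) < \<infinity>"
    using assms by (intro G_integral_less_top) auto
  have "ennreal (S t powr q) \<le> ennreal (enn2real (\<integral>\<^sup>+x\<in>{t..y}. G x \<partial>lborel) / V y)"
    using S_pow_le[OF assms] by (intro ennreal_leI) (simp add: y_def)
  also have "\<dots> = ennreal (enn2real (\<integral>\<^sup>+x\<in>{t..y}. G x \<partial>lborel)) * ennreal (1 / V y)"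
    using \<open>0 < V y\<close> by (simp add: ennreal_mult[symmetric])
  also have "\<dots> = (\<integral>\<^sup>+x\<in>{t..y}. G x \<partial>lborel) * ennreal (1 / V y)"
    using fin by simp
  also have "\<dots> = (\<integral>\<^sup>+x. G x * indicator {t..y} x * ennreal (1 / V y) \<partial>lborel)"
    by (rule nn_integral_multc[symmetric]) measurable
  also have "\<dots> \<le> (\<integral>\<^sup>+x\<in>{t..y}. G x / W (a x) x \<partial>lborel)"
    using inverse_V_a_inv_le[OF assms]
    by (intro nn_integral_mono) (auto simp: y_def divide_ennreal_def mult_left_mono split: split_indicator)
  also have "\<dots> = Psi t"
    by (simp add: Psi_eq[OF assms] y_def)
  finally show ?thesis .
qed

lemma wgt_Psi_integral: "(\<integral>\<^sup>+t. ennreal (wgt q v1 t) * Psi t \<partial>lborel) = ennreal N"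
proof -
  define F where "F t x =
    (if 0 < t \<and> t \<le> x \<and> a_ext x \<le> t then ennreal (wgt q v1 t) * (G x / W (a_ext x) x) else 0)" for t x
  have [measurable]: "case_prod F \<in> borel_measurable (lborel \<Otimes>\<^sub>M lborel)"
    unfolding F_def by measurable
  have "(\<integral>\<^sup>+t. ennreal (wgt q v1 t) * Psi t \<partial>lborel) = (\<integral>\<^sup>+t. (\<integral>\<^sup>+x. F t x \<partial>lborel) \<partial>lborel)"
    unfolding Psi_def F_def by (subst nn_integral_cmult[symmetric]) (auto intro!: nn_integral_cong)
  also have "\<dots> = (\<integral>\<^sup>+x. (\<integral>\<^sup>+t. F t x \<partial>lborel) \<partial>lborel)"
    by (rule lborel_pair.Fubini') measurable
  also have "\<dots> = (\<integral>\<^sup>+x\<in>{0<..}. G x \<partial>lborel)"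
  proof (intro nn_integral_cong)
    fix x :: real
    show "(\<integral>\<^sup>+t. F t x \<partial>lborel) = G x * indicator {0<..} x"
    proof (cases "0 < x")
      case True
      have "(\<integral>\<^sup>+t. F t x \<partial>lborel)
          = (\<integral>\<^sup>+t. G x / W (a x) x * (ennreal (wgt q v1 t) * indicator {a x..x} t) \<partial>lborel)"
        using True ab_bounds[OF True]
        by (intro nn_integral_cong) (auto simp: F_def a_ext_def mult_ac split: split_indicator)
      also have "\<dots> = G x / W (a x) x * W (a x) x"
        unfolding W_def by (rule nn_integral_cmult) measurable
      also have "\<dots> = G x"
        using W_pos[of "a x" x] W_less_top[of "a x" x] ab_bounds[OF True]
        by (simp add: ennreal_divide_times)
      finally show ?thesis using True by simp
    next
      case False
      then have "F t x = 0" for t by (simp add: F_def)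
      with False show ?thesis by simp
    qed
  qed
  finally show ?thesis by (simp add: G_integral_eq_N)
qed

lemma enn_rt_integral_le:
  assumes "0 \<le> c" and F: "\<And>t. 0 < t \<Longrightarrow> F t \<le> c powr q * (wgt q v1 t * S t powr q)"
  shows "enn_rt q (\<integral>\<^sup>+t\<in>{0<..}. ennreal (F t) \<partial>lborel) \<le> ennreal (c * N powr (1/q))"
proof (rule enn_rt_le_ennreal)
  have "(\<integral>\<^sup>+t\<in>{0<..}. ennreal (F t) \<partial>lborel)
      \<le> (\<integral>\<^sup>+t. ennreal (c powr q) * (ennreal (wgt q v1 t) * Psi t) \<partial>lborel)"
  proof (intro nn_integral_mono)
    fix t :: real
    show "ennreal (F t) * indicator {0<..} t \<le> ennreal (c powr q) * (ennreal (wgt q v1 t) * Psi t)"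
    proof (cases "0 < t")
      case True
      have "ennreal (F t) \<le> ennreal (c powr q * (wgt q v1 t * S t powr q))"
        using F[OF True] by (rule ennreal_leI)
      also have "\<dots> = ennreal (c powr q) * (ennreal (wgt q v1 t) * ennreal (S t powr q))"
        by (simp add: ennreal_mult wgt_nonneg)
      also have "\<dots> \<le> ennreal (c powr q) * (ennreal (wgt q v1 t) * Psi t)"
        using S_pow_le_Psi[OF True] by (intro mult_left_mono) auto
      finally show ?thesis using True by simp
    qed simp
  qed
  also have "\<dots> = ennreal (c powr q * N)"
    by (simp add: nn_integral_cmult wgt_Psi_integral ennreal_mult N_nonneg)
  finally show "(\<integral>\<^sup>+t\<in>{0<..}. ennreal (F t) \<partial>lborel) \<le> ennreal (c powr q * N)" .
qed (use q_gt_1 assms(1) N_nonneg in auto)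

lemma GG_inner_le:
  assumes "0 < t"
  shows "\<bar>\<integral>x\<in>{t..inv_into {0<..} a t}. g x / V x * Iw q v1 (a x) t \<partial>lborel\<bar> \<le> 1/2 * S t"
proof (rule abs_set_integral_le_dominated[OF _ g_borel _ _ S_eq[OF assms] S_nonneg])
  fix x assume x: "x \<in> {t..inv_into {0<..} a t}"
  note x_bounds = mem_a_inv_interval[OF assms x]
  have "W (a x) t \<le> ennreal (V x / 2)"
    using W_mono[of "a x" "a x" t x] W_half(1)[OF x_bounds(1)] x_bounds by simp
  then have "Iw q v1 (a x) t \<le> V x / 2"
    unfolding Iw_eq_W by (rule enn2real_leI[rotated]) (simp add: V_nonneg)
  moreover have "0 \<le> Iw q v1 (a x) t"
    by (simp add: Iw_eq_W)
  ultimately have "Iw q v1 (a x) t / V x \<le> 1/2"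
    using V_pos[OF x_bounds(1)] by (simp add: divide_le_eq)
  then have "\<bar>g x\<bar> * (Iw q v1 (a x) t / V x) \<le> \<bar>g x\<bar> * (1/2)"
    by (rule mult_left_mono) simp
  then show "\<bar>g x / V x * Iw q v1 (a x) t\<bar> \<le> 1/2 * \<bar>g x\<bar>"
    using V_pos[OF x_bounds(1)] \<open>0 \<le> Iw q v1 (a x) t\<close> by (simp add: abs_mult mult.commute)
qed auto

lemma GGc_inner_le:
  assumes "0 < t"
  shows "V t * \<bar>\<integral>x\<in>{t..inv_into {0<..} a t}. g x / V x \<partial>lborel\<bar> \<le> 2 * S t"
proof -
  have "\<bar>\<integral>x\<in>{t..inv_into {0<..} a t}. g x / V x \<partial>lborel\<bar> \<le> 2 / V t * S t"
  proof (rule abs_set_integral_le_dominated[OF _ g_borel _ _ S_eq[OF assms] S_nonneg])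
    fix x assume x: "x \<in> {t..inv_into {0<..} a t}"
    note x_bounds = mem_a_inv_interval[OF assms x]
    have "V t \<le> 2 * V x"
      using assms x_bounds by (intro V_doubling) auto
    then have "1 / V x \<le> 2 / V t"
      using V_pos[OF assms] V_pos[OF x_bounds(1)] by (simp add: field_simps)
    then show "\<bar>g x / V x\<bar> \<le> 2 / V t * \<bar>g x\<bar>"
      using mult_left_mono[of "1 / V x" "2 / V t" "\<bar>g x\<bar>"] V_pos[OF x_bounds(1)]
      by (simp add: abs_divide mult.commute)
  qed (use V_pos[OF assms] in auto)
  then have "V t * \<bar>\<integral>x\<in>{t..inv_into {0<..} a t}. g x / V x \<partial>lborel\<bar> \<le> V t * (2 / V t * S t)"
    using V_nonneg by (rule mult_left_mono)
  with V_pos[OF assms] show ?thesis by simp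
qed

lemma GG_le: "GG q v1 a b g \<le> ennreal (1/2 * N powr (1/q))"
  unfolding GG_def
proof (rule enn_rt_integral_le)
  fix t :: real assume "0 < t"
  let ?I = "\<bar>\<integral>x\<in>{t..inv_into {0<..} a t}. g x / V x * Iw q v1 (a x) t \<partial>lborel\<bar>"
  have "?I powr q \<le> (1/2 * S t) powr q"
    using GG_inner_le[OF \<open>0 < t\<close>] q_gt_1 by (intro powr_mono2) auto
  also have "\<dots> = (1/2) powr q * S t powr q"
    by (rule powr_mult)
  finally have "wgt q v1 t * ?I powr q \<le> wgt q v1 t * ((1/2) powr q * S t powr q)"
    by (rule mult_left_mono[OF _ wgt_nonneg])
  then show "wgt q v1 t * ?I powr q \<le> (1/2) powr q * (wgt q v1 t * S t powr q)"
    by (simp add: mult_ac)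
qed simp

lemma GGc_le: "GGc q v1 a b g \<le> ennreal (2 * N powr (1/q))"
  unfolding GGc_def
proof (rule enn_rt_integral_le)
  fix t :: real assume "0 < t"
  let ?I = "\<bar>\<integral>x\<in>{t..inv_into {0<..} a t}. g x / V x \<partial>lborel\<bar>"
  have "V t powr q * ?I powr q = (V t * ?I) powr q"
    by (simp add: powr_mult V_nonneg)
  also have "\<dots> \<le> (2 * S t) powr q"
    using GGc_inner_le[OF \<open>0 < t\<close>] q_gt_1 V_nonneg[of t] by (intro powr_mono2) auto
  also have "\<dots> = 2 powr q * S t powr q"
    by (rule powr_mult)
  finally have "wgt q v1 t * (V t powr q * ?I powr q) \<le> wgt q v1 t * (2 powr q * S t powr q)"
    by (rule mult_left_mono[OF _ wgt_nonneg])
  then show "wgt q v1 t * V t powr q * ?I powr q \<le> 2 powr q * (wgt q v1 t * S t powr q)"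
    by (simp add: mult_ac)
qed simp

lemma GG_add_GGc_le:
  "GG q v1 a b g + GGc q v1 a b g \<le> ennreal (5/2) * Lnorm_inv q v0 g {0<..}"
proof -
  have "GG q v1 a b g + GGc q v1 a b g \<le> ennreal (1/2 * N powr (1/q)) + ennreal (2 * N powr (1/q))"
    using GG_le GGc_le by (rule add_mono)
  also have "\<dots> = ennreal (5/2) * ennreal (N powr (1/q))"
    by (simp add: ennreal_mult[symmetric] flip: ennreal_plus)
  finally show ?thesis by (simp add: Lnorm_inv_g_eq_N)
qed

lemma g_loc_L1: "loc_L1 g"
  unfolding loc_L1_def loc_Lr_def
proof (intro conjI allI impI)
  show "set_borel_measurable lborel {0<..} g"
    unfolding set_borel_measurable_def by measurable
  fix x y :: real assume "0 < x" "x \<le> y"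
  have "(\<integral>\<^sup>+s\<in>{x..y}. ennreal \<bar>g s\<bar> \<partial>lborel) < \<infinity>"
    using g_local_Holder[OF \<open>0 < x\<close> \<open>x \<le> y\<close>] by (rule le_less_trans) simp
  then show "Lnorm 1 g {x..y} < \<infinity>"
    by (simp add: Lnorm_def enn_rt_less_top_iff)
qed

lemma in_W: "in_W q v1 a b g"
proof -
  have "GG q v1 a b g + GGc q v1 a b g < \<infinity>"
    using GG_add_GGc_le by (rule le_less_trans) (use g_norm_finite in \<open>simp add: ennreal_mult_less_top\<close>)
  with g_loc_L1 show ?thesis
    unfolding in_W_def by blast
qed

end

section \<open>Weights given only on the half line\<close>

(* The hypotheses control v0, v1 and g, measurability included, only on (0, inf), and every
   functional involved only sees those values; the locales are therefore instantiated with
   the extensions by zero. *)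

definition extend_by_zero :: "(real \<Rightarrow> real) \<Rightarrow> real \<Rightarrow> real" where
  "extend_by_zero f x = (if 0 < x then f x else 0)"

lemma extend_by_zero_pos [simp]: "0 < x \<Longrightarrow> extend_by_zero f x = f x"
  by (simp add: extend_by_zero_def)

lemma borel_measurable_extend_by_zero:
  assumes "set_borel_measurable lborel {0<..} f"
  shows "extend_by_zero f \<in> borel_measurable borel"
proof -
  have "(\<lambda>x. indicator {0<..} x *\<^sub>R f x) = extend_by_zero f"
    by (auto simp: extend_by_zero_def indicator_def)
  with assms show ?thesis
    by (simp add: set_borel_measurable_def)
qed

lemma Lnorm_cong_pos:
  assumes "S \<subseteq> {0<..}" "\<And>x. 0 < x \<Longrightarrow> f x = f' x"
  shows "Lnorm r f S = Lnorm r f' S"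
  unfolding Lnorm_def using assms
  by (intro arg_cong[where f = "enn_rt r"] set_nn_integral_cong) auto

lemma Lnorm_inv_cong_pos:
  assumes "S \<subseteq> {0<..}" "\<And>x. 0 < x \<Longrightarrow> v x = v' x" "\<And>x. 0 < x \<Longrightarrow> h x = h' x"
  shows "Lnorm_inv r v h S = Lnorm_inv r v' h' S"
  unfolding Lnorm_inv_def using assms
  by (intro arg_cong[where f = "enn_rt r"] set_nn_integral_cong) auto

lemma loc_Lr_cong_pos:
  assumes "\<And>x. 0 < x \<Longrightarrow> f x = f' x"
  shows "loc_Lr r f \<longleftrightarrow> loc_Lr r f'"
proof -
  have "(\<lambda>x. indicator {0<..} x *\<^sub>R f x) = (\<lambda>x. indicator {0<..} x *\<^sub>R f' x)"
    by (auto simp: assms indicator_def)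
  moreover have "Lnorm r f {x..y} = Lnorm r f' {x..y}" if "0 < x" for x y
    using that assms by (intro Lnorm_cong_pos) auto
  ultimately show ?thesis
    by (auto simp: loc_Lr_def set_borel_measurable_def)
qed

lemma loc_Lr_inv_cong_pos:
  assumes "\<And>x. 0 < x \<Longrightarrow> v x = v' x"
  shows "loc_Lr_inv r v \<longleftrightarrow> loc_Lr_inv r v'"
proof -
  have "Lnorm_inv r v (\<lambda>_. 1) {x..y} = Lnorm_inv r v' (\<lambda>_. 1) {x..y}" if "0 < x" for x y
    using that assms by (intro Lnorm_inv_cong_pos) auto
  then show ?thesis
    by (auto simp: loc_Lr_inv_def)
qed

lemma ab_funcs_cong_pos:
  assumes "ab_funcs p v0 v1 a b" "\<And>x. 0 < x \<Longrightarrow> v0 x = v0' x" "\<And>x. 0 < x \<Longrightarrow> v1 x = v1' x"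
  shows "ab_funcs p v0' v1' a b"
proof -
  have sub: "{a t..t} \<subseteq> {0<..}" "{t..b t} \<subseteq> {0<..}" "{a t..b t} \<subseteq> {0<..}" if "0 < t" for t
    using assms(1) that by (force simp: ab_funcs_def)+
  have "(\<integral>\<^sup>+x\<in>{a t..t}. ennreal (wgt (p/(p-1)) v1 x) \<partial>lborel)
      = (\<integral>\<^sup>+x\<in>{a t..t}. ennreal (wgt (p/(p-1)) v1' x) \<partial>lborel)"
    "(\<integral>\<^sup>+x\<in>{t..b t}. ennreal (wgt (p/(p-1)) v1 x) \<partial>lborel)
      = (\<integral>\<^sup>+x\<in>{t..b t}. ennreal (wgt (p/(p-1)) v1' x) \<partial>lborel)"
    "Lnorm_inv (p/(p-1)) v1 (\<lambda>_. 1) {a t..b t} = Lnorm_inv (p/(p-1)) v1' (\<lambda>_. 1) {a t..b t}"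
    "Lnorm p v0 {a t..b t} = Lnorm p v0' {a t..b t}"
    if "0 < t" for t
    using sub[OF that] assms(2,3)
    by (auto simp: wgt_def intro!: set_nn_integral_cong Lnorm_inv_cong_pos Lnorm_cong_pos)
  with assms(1) show ?thesis
    by (simp add: ab_funcs_def)
qed

lemma GG_GGc_cong_pos:
  assumes v: "\<And>x. 0 < x \<Longrightarrow> v x = v' x" and g: "\<And>x. 0 < x \<Longrightarrow> g x = g' x"
    and a: "\<And>x. 0 < x \<Longrightarrow> 0 < a x"
  shows "GG q v a b g = GG q v' a b g'" and "GGc q v a b g = GGc q v' a b g'"
proof -
  have Iw: "Iw q v s t = Iw q v' s t" if "0 < s" for s t
    unfolding Iw_def using that by (intro set_lebesgue_integral_cong) (auto simp: wgt_def v)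
  have V: "V1fun q v a b x = V1fun q v' a b x" if "0 < x" for x
    unfolding V1fun_def using a[OF that] by (rule Iw)
  have "(\<integral>x\<in>{t..inv_into {0<..} a t}. g x / V1fun q v a b x * Iw q v (a x) t \<partial>lborel)
      = (\<integral>x\<in>{t..inv_into {0<..} a t}. g' x / V1fun q v' a b x * Iw q v' (a x) t \<partial>lborel)"
    "(\<integral>x\<in>{t..inv_into {0<..} a t}. g x / V1fun q v a b x \<partial>lborel)
      = (\<integral>x\<in>{t..inv_into {0<..} a t}. g' x / V1fun q v' a b x \<partial>lborel)"
    if "0 < t" for t
    using that by (auto simp: g V Iw a intro!: set_lebesgue_integral_cong)
  then show "GG q v a b g = GG q v' a b g'" "GGc q v a b g = GGc q v' a b g'"
    unfolding GG_def GGc_def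
    by (auto simp: wgt_def v V intro!: arg_cong[where f = "enn_rt q"] set_nn_integral_cong)
qed

lemma in_W_cong_pos:
  assumes "\<And>x. 0 < x \<Longrightarrow> v x = v' x" "\<And>x. 0 < x \<Longrightarrow> g x = g' x" "\<And>x. 0 < x \<Longrightarrow> 0 < a x"
  shows "in_W q v a b g \<longleftrightarrow> in_W q v' a b g'"
  using GG_GGc_cong_pos[OF assms] loc_Lr_cong_pos[of g g'] assms(2)
  by (simp add: in_W_def loc_L1_def)

lemma ab_weights_function_extend_by_zero:
  assumes "1 < p" and v0: "weight_class p v0" and v1: "weight_class p v1"
    and "loc_Lr_inv (p/(p-1)) v1" "ab_funcs p v0 v1 a b"
    and "set_borel_measurable lborel {0<..} g" "Lnorm_inv (p/(p-1)) v0 g {0<..} < \<infinity>"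
  shows "ab_weights_function p (p/(p-1))
    (extend_by_zero v0) (extend_by_zero v1) a b (extend_by_zero g)"
proof unfold_locales
  show "extend_by_zero v0 \<in> borel_measurable lborel" "extend_by_zero v1 \<in> borel_measurable lborel"
    using v0 v1 by (auto simp: weight_class_def loc_Lr_def intro: borel_measurable_extend_by_zero)
  show "extend_by_zero g \<in> borel_measurable lborel"
    using assms(6) by (simp add: borel_measurable_extend_by_zero)
  show "0 \<le> extend_by_zero v1 x" for x
    using v1 by (simp add: weight_class_def extend_by_zero_def)
  show "Lnorm p (extend_by_zero v0) {x..y} < \<infinity>" if "0 < x" "x \<le> y" for x y
  proof -
    have "Lnorm p (extend_by_zero v0) {x..y} = Lnorm p v0 {x..y}"
      using that by (intro Lnorm_cong_pos) auto
    with v0 that show ?thesis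
      by (simp add: weight_class_def loc_Lr_def)
  qed
  show "loc_Lr_inv (p/(p-1)) (extend_by_zero v1)"
    using assms(4) loc_Lr_inv_cong_pos[of v1 "extend_by_zero v1"] by simp
  show "ab_funcs p (extend_by_zero v0) (extend_by_zero v1) a b"
    using assms(5) by (rule ab_funcs_cong_pos) simp_all
  show "Lnorm_inv (p/(p-1)) (extend_by_zero v0) (extend_by_zero g) {0<..} < \<infinity>"
    using assms(7) Lnorm_inv_cong_pos[of "{0<..}" v0 "extend_by_zero v0" g "extend_by_zero g"] by simp
qed (use assms(1) in simp_all)

lemma W_space_embedding:
  assumes "1 < p" "weight_class p v0" "weight_class p v1" "loc_Lr_inv (p/(p-1)) v1"
    "ab_funcs p v0 v1 a b" "set_borel_measurable lborel {0<..} g"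
    "Lnorm_inv (p/(p-1)) v0 g {0<..} < \<infinity>"
  shows "in_W (p/(p-1)) v1 a b g \<and>
    GG (p/(p-1)) v1 a b g + GGc (p/(p-1)) v1 a b g \<le> ennreal (5/2) * Lnorm_inv (p/(p-1)) v0 g {0<..}"
proof -
  interpret ab_weights_function p "p/(p-1)"
    "extend_by_zero v0" "extend_by_zero v1" a b "extend_by_zero g"
    using assms by (rule ab_weights_function_extend_by_zero)
  have "0 < a x" if "0 < x" for x
    using ab_bounds[OF that] by simp
  then show ?thesis
    using in_W GG_add_GGc_le
      in_W_cong_pos[of v1 "extend_by_zero v1" g "extend_by_zero g" a]
      GG_GGc_cong_pos[of v1 "extend_by_zero v1" g "extend_by_zero g" a]
      Lnorm_inv_cong_pos[of "{0<..}" v0 "extend_by_zero v0" g "extend_by_zero g"]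
    by simp
qed

(* The two hypotheses involving c are what the paper needs to construct a and b. *)

theorem lemma3p1:
  fixes p :: real
  assumes "1 < p"
  shows "\<exists>C>0. \<forall>v0 v1 a b c g.
    weight_class p v0 \<and> weight_class p v1 \<and> loc_Lr_inv (p/(p-1)) v1 \<and>
    0 < c \<and>
    Lnorm_inv (p/(p-1)) v1 (\<lambda>_. 1) {0<..<c} * Lnorm p v0 {0<..<c} = \<infinity> \<and>
    Lnorm_inv (p/(p-1)) v1 (\<lambda>_. 1) {c<..} * Lnorm p v0 {c<..} = \<infinity> \<and>
    ab_funcs p v0 v1 a b \<and>
    set_borel_measurable lborel {0<..} g \<and> Lnorm_inv (p/(p-1)) v0 g {0<..} < \<infinity>
    \<longrightarrow> in_W (p/(p-1)) v1 a b g \<and>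
        GG (p/(p-1)) v1 a b g + GGc (p/(p-1)) v1 a b g
          \<le> ennreal C * Lnorm_inv (p/(p-1)) v0 g {0<..}"
  using W_space_embedding[OF assms] by (intro exI[of _ "5/2"]) auto

end
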